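(* Let $Q\subset\mathrm{EX}(M)$. The map $\iota_Q:M\to Q(M)$, $\iota_Q(x)=q(\alpha(x))$ where $\alpha\in\mathcal{A}(M)$ is any chart with $x\in\mathrm{dom}(\alpha)$ and $\alpha(x)$ is regarded as a point of $N_{(\alpha,\mathrm{ran}(\alpha))}$, is well defined (independent of $\alpha$), injective, continuous, and a homeomorphism onto its image; moreover $\iota_Q(M)$ is an open dense subset of $Q(M)$.
   Context: Conventions: $M$ is an $n$-dimensional smooth manifold (Hausdorff, second countable) with maximal $C^\infty$ atlas $\mathcal{A}(M)$; every chart $\alpha$ has open domain $\mathrm{dom}(\alpha)\subset M$ and open range $\mathrm{ran}(\alpha)\subset\mathbb{R}^n$. For $A\subset\mathbb{R}^n$, $\partial A$ is its boundary in $\mathbb{R}^n$; for $A\subset U\subset\mathbb{R}^n$, $\partial_U A$ is the boundary of $A$ relative to $U$. An admissible boundary point of $\alpha$ is a $p\in\partial\,\mathrm{ran}(\alpha)$ such that every sequence $(x_i)\subset\mathrm{dom}(\alpha)$ with $\alpha(x_i)\to p$ has no accumulation point in $M$; $B(\alpha)$ is the set of these. An extension is a pair $(\alpha,U)$, $U\subset\mathbb{R}^n$ open, $\mathrm{ran}(\alpha)\subset U$, $\emptyset\ne\partial_U\mathrm{ran}(\alpha)\subset B(\alpha)$; $\mathrm{EX}(M)$ is the set of extensions. A boundary set is $(\alpha,U,V)$ with $(\alpha,U)\in\mathrm{EX}(M)$, $V\subset B(\alpha)\cap U$ (a boundary point if $V=\{p\}$). $(\alpha,U,V)$ covers $(\beta,X,Y)$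 if for every sequence $(y_i)\subset\mathrm{dom}(\beta)$ with $(\beta(y_i))$ having an accumulation point in $Y$ there is a subsequence $(v_i)\subset\mathrm{dom}(\alpha)$ of $(y_i)$ with $(\alpha(v_i))$ having an accumulation point in $V$; they are equivalent, $\equiv$, if each covers the other. Completion: for $Q\subset\mathrm{EX}(M)$ let $P=\{(\alpha,\mathrm{ran}(\alpha)):\alpha\in\mathcal{A}(M)\}$, $S_Q=P\cup Q$, $N_{(\alpha,U)}=\mathrm{ran}(\alpha)\cup\partial_U\mathrm{ran}(\alpha)$ with subspace topology of $\mathbb{R}^n$, $N_Q=\bigsqcup_{(\alpha,U)\in S_Q}N_{(\alpha,U)}$ with disjoint-union topology. Identify $x\in N_{(\alpha,U)}$ with $y\in N_{(\beta,X)}$ iff either $x\in\mathrm{ran}(\alpha)$, $y\in\mathrm{ran}(\beta)$, $\beta\circ\alpha^{-1}(x)=y$, or $x\in\partial_U\mathrm{ran}(\alpha)$, $y\in\partial_X\mathrm{ran}(\beta)$, $(\alpha,U,\{x\})\equiv(\beta,X,\{y\})$. $Q(M)$ is the quotient space with the quotient topology and $q:N_Q\to Q(M)$ the quotient map. *)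

theory Defs
  imports "HOL-Analysis.Analysis"
begin

text \<open>A chart on M is a pair (domain, map) with values in a Euclidean space 'e
  (so n = DIM('e)).\<close>

type_synonym ('a, 'e) chart = "'a set \<times> ('a \<Rightarrow> 'e)"

definition cdom :: "('a, 'e) chart \<Rightarrow> 'a set" where "cdom \<alpha> = fst \<alpha>"
definition cmap :: "('a, 'e) chart \<Rightarrow> 'a \<Rightarrow> 'e" where "cmap \<alpha> = snd \<alpha>"
definition cran :: "('a, 'e) chart \<Rightarrow> 'e set" where "cran \<alpha> = cmap \<alpha> ` cdom \<alpha>"

definition is_chart :: "'a topology \<Rightarrow> ('a, 'e::euclidean_space) chart \<Rightarrow> bool" where
  "is_chart M \<alpha> \<longleftrightarrow> openin M (cdom \<alpha>) \<and> open (cran \<alpha>) \<and>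
     homeomorphic_map (subtopology M (cdom \<alpha>)) (top_of_set (cran \<alpha>)) (cmap \<alpha>)"

inductive_set partials :: "'e::euclidean_space set \<Rightarrow> ('e \<Rightarrow> 'f::real_normed_vector) \<Rightarrow> ('e \<Rightarrow> 'f) set"
  for S f where
  base: "f \<in> partials S f"
| step: "g \<in> partials S f \<Longrightarrow> i \<in> Basis \<Longrightarrow>
         (\<forall>x\<in>S. ((\<lambda>t. g (x + t *\<^sub>R i)) has_vector_derivative g' x) (at 0)) \<Longrightarrow> g' \<in> partials S f"

definition Cinf_on :: "'e::euclidean_space set \<Rightarrow> ('e \<Rightarrow> 'f::real_normed_vector) \<Rightarrow> bool" where
  "Cinf_on S f \<longleftrightarrow> (\<forall>g\<in>partials S f. continuous_on S g \<and>
      (\<forall>i\<in>Basis. \<exists>g'. \<forall>x\<in>S. ((\<lambda>t. g (x + t *\<^sub>R i)) has_vector_derivative g' x) (at 0)))"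

definition transition :: "('a, 'e) chart \<Rightarrow> ('a, 'e) chart \<Rightarrow> 'e \<Rightarrow> 'e" where
  "transition \<alpha> \<beta> = cmap \<beta> \<circ> inv_into (cdom \<alpha>) (cmap \<alpha>)"

definition smooth_compat :: "('a, 'e::euclidean_space) chart \<Rightarrow> ('a, 'e) chart \<Rightarrow> bool" where
  "smooth_compat \<alpha> \<beta> \<longleftrightarrow>
     Cinf_on (cmap \<alpha> ` (cdom \<alpha> \<inter> cdom \<beta>)) (transition \<alpha> \<beta>) \<and>
     Cinf_on (cmap \<beta> ` (cdom \<alpha> \<inter> cdom \<beta>)) (transition \<beta> \<alpha>)"

definition maximal_smooth_atlas :: "'a topology \<Rightarrow> ('a, 'e::euclidean_space) chart set \<Rightarrow> bool" where
  "maximal_smooth_atlas M A \<longleftrightarrow>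
     (\<forall>\<alpha>\<in>A. is_chart M \<alpha>) \<and> (\<Union>\<alpha>\<in>A. cdom \<alpha>) = topspace M \<and>
     (\<forall>\<alpha>\<in>A. \<forall>\<beta>\<in>A. smooth_compat \<alpha> \<beta>) \<and>
     (\<forall>\<beta>. is_chart M \<beta> \<and> (\<forall>\<alpha>\<in>A. smooth_compat \<alpha> \<beta>) \<longrightarrow> \<beta> \<in> A)"

definition smooth_manifold :: "'a topology \<Rightarrow> ('a, 'e::euclidean_space) chart set \<Rightarrow> bool" where
  "smooth_manifold M A \<longleftrightarrow> Hausdorff_space M \<and> second_countable M \<and> maximal_smooth_atlas M A"

text \<open>y is an accumulation point of the sequence s in X: every neighbourhood of y
  contains s i for infinitely many i (equivalently, y is a subsequential limit).\<close>
definition seq_accpt :: "'b topology \<Rightarrow> (nat \<Rightarrow> 'b) \<Rightarrow> 'b \<Rightarrow> bool" where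
  "seq_accpt X s y \<longleftrightarrow> y \<in> topspace X \<and> (\<forall>U. openin X U \<and> y \<in> U \<longrightarrow> infinite {i. s i \<in> U})"

definition adm_boundary :: "'a topology \<Rightarrow> ('a, 'e::euclidean_space) chart \<Rightarrow> 'e set" where
  "adm_boundary M \<alpha> = {p \<in> frontier (cran \<alpha>).
      \<forall>s. (\<forall>i. s i \<in> cdom \<alpha>) \<and> (cmap \<alpha> \<circ> s) \<longlonglongrightarrow> p \<longrightarrow> \<not> (\<exists>y. seq_accpt M s y)}"

definition rel_boundary :: "'e::euclidean_space set \<Rightarrow> 'e set \<Rightarrow> 'e set" where
  "rel_boundary U S = (top_of_set U) frontier_of S"

definition EXT :: "'a topology \<Rightarrow> ('a, 'e::euclidean_space) chart set \<Rightarrow> (('a, 'e) chart \<times> 'e set) set" where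
  "EXT M A = {(\<alpha>, U). \<alpha> \<in> A \<and> open U \<and> cran \<alpha> \<subseteq> U \<and>
       rel_boundary U (cran \<alpha>) \<noteq> {} \<and> rel_boundary U (cran \<alpha>) \<subseteq> adm_boundary M \<alpha>}"

text \<open>(alpha,U,V) covers (beta,X,Y); the sets U, X play no role in the condition.\<close>
definition covers :: "('a, 'e::euclidean_space) chart \<Rightarrow> 'e set \<Rightarrow> ('a, 'e) chart \<Rightarrow> 'e set \<Rightarrow> bool" where
  "covers \<alpha> V \<beta> Y \<longleftrightarrow>
     (\<forall>s. (\<forall>i. s i \<in> cdom \<beta>) \<and> (\<exists>y\<in>Y. seq_accpt euclidean (cmap \<beta> \<circ> s) y) \<longrightarrow>
        (\<exists>r. strict_mono r \<and> (\<forall>i. s (r i) \<in> cdom \<alpha>) \<and>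
             (\<exists>v\<in>V. seq_accpt euclidean (cmap \<alpha> \<circ> (s \<circ> r)) v)))"

definition bequiv :: "('a, 'e::euclidean_space) chart \<Rightarrow> 'e set \<Rightarrow> ('a, 'e) chart \<Rightarrow> 'e set \<Rightarrow> bool" where
  "bequiv \<alpha> V \<beta> Y \<longleftrightarrow> covers \<alpha> V \<beta> Y \<and> covers \<beta> Y \<alpha> V"

definition SQ :: "('a, 'e::euclidean_space) chart set \<Rightarrow> (('a, 'e) chart \<times> 'e set) set
                  \<Rightarrow> (('a, 'e) chart \<times> 'e set) set" where
  "SQ A Q = {(\<alpha>, cran \<alpha>) | \<alpha>. \<alpha> \<in> A} \<union> Q"

definition Npiece :: "('a, 'e::euclidean_space) chart \<times> 'e set \<Rightarrow> 'e set" where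
  "Npiece e = cran (fst e) \<union> rel_boundary (snd e) (cran (fst e))"

definition NQ :: "('a, 'e::euclidean_space) chart set \<Rightarrow> (('a, 'e) chart \<times> 'e set) set
                  \<Rightarrow> ((('a, 'e) chart \<times> 'e set) \<times> 'e) topology" where
  "NQ A Q = sum_topology (\<lambda>e. top_of_set (Npiece e)) (SQ A Q)"

definition ident :: "(('a, 'e::euclidean_space) chart \<times> 'e set) \<times> 'e \<Rightarrow> (('a, 'e) chart \<times> 'e set) \<times> 'e \<Rightarrow> bool" where
  "ident p p' \<longleftrightarrow>
     (let \<alpha> = fst (fst p); U = snd (fst p); x = snd p;
          \<beta> = fst (fst p'); X = snd (fst p'); y = snd p' in
       (x \<in> cran \<alpha> \<and> y \<in> cran \<beta> \<and> (\<exists>z\<in>cdom \<alpha> \<inter> cdom \<beta>. cmap \<alpha> z = x \<and> cmap \<beta> z = y)) \<or>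
       (x \<in> rel_boundary U (cran \<alpha>) \<and> y \<in> rel_boundary X (cran \<beta>) \<and> bequiv \<alpha> {x} \<beta> {y}))"

definition qrel :: "('a, 'e::euclidean_space) chart set \<Rightarrow> (('a, 'e) chart \<times> 'e set) set
                   \<Rightarrow> (('a, 'e) chart \<times> 'e set) \<times> 'e \<Rightarrow> (('a, 'e) chart \<times> 'e set) \<times> 'e \<Rightarrow> bool" where
  "qrel A Q = equivclp (\<lambda>p p'. p \<in> topspace (NQ A Q) \<and> p' \<in> topspace (NQ A Q) \<and> ident p p')"

definition qmap :: "('a, 'e::euclidean_space) chart set \<Rightarrow> (('a, 'e) chart \<times> 'e set) set
                   \<Rightarrow> (('a, 'e) chart \<times> 'e set) \<times> 'e \<Rightarrow> ((('a, 'e) chart \<times> 'e set) \<times> 'e) set" where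
  "qmap A Q p = {p'. qrel A Q p p'}"

definition QM :: "('a, 'e::euclidean_space) chart set \<Rightarrow> (('a, 'e) chart \<times> 'e set) set
                  \<Rightarrow> ((('a, 'e) chart \<times> 'e set) \<times> 'e) set topology" where
  "QM A Q = topology (\<lambda>T. T \<subseteq> qmap A Q ` topspace (NQ A Q) \<and>
                          openin (NQ A Q) {p \<in> topspace (NQ A Q). qmap A Q p \<in> T})"

definition iota :: "('a, 'e::euclidean_space) chart set \<Rightarrow> (('a, 'e) chart \<times> 'e set) set
                   \<Rightarrow> 'a \<Rightarrow> ((('a, 'e) chart \<times> 'e set) \<times> 'e) set" where
  "iota A Q x = (let \<alpha> = (SOME \<alpha>. \<alpha> \<in> A \<and> x \<in> cdom \<alpha>) in qmap A Q ((\<alpha>, cran \<alpha>), cmap \<alpha> x))"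

end

theory Submission imports Defs begin

text \<open>Every point of \<open>N\<^sub>Q\<close> lying in the range of its chart determines a point of \<open>M\<close>
  (its \<open>underlying_point\<close>), a boundary point determines none, and both kinds of identification
  respect this assignment. Hence the class of a chart point remembers the point of \<open>M\<close> it comes
  from: \<open>\<iota>\<^sub>Q\<close> is injective, and \<open>q\<^sup>-\<^sup>1(\<iota>\<^sub>Q(W))\<close> is the union of the chart images of \<open>W\<close>, which is
  open in \<open>N\<^sub>Q\<close> when \<open>W\<close> is open. On a chart domain \<open>\<iota>\<^sub>Q\<close> is the chart followed by the inclusion
  of the boundaryless piece \<open>N\<^sub>(\<^sub>\<alpha>\<^sub>,\<^sub>r\<^sub>a\<^sub>n \<^sub>\<alpha>\<^sub>)\<close> and by \<open>q\<close>, hence continuous; and \<open>\<iota>\<^sub>Q(M)\<close> is dense because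
  every piece \<open>N\<^sub>(\<^sub>\<alpha>\<^sub>,\<^sub>U\<^sub>)\<close> lies in the closure of \<open>ran \<alpha>\<close>.\<close>

lemma quotient_map_quotient_topology:
  "quotient_map X (topology (\<lambda>T. T \<subseteq> f ` topspace X \<and> openin X {p \<in> topspace X. f p \<in> T})) f"
    (is "quotient_map X ?Y f")
proof -
  let ?open = "\<lambda>T. T \<subseteq> f ` topspace X \<and> openin X {p \<in> topspace X. f p \<in> T}"
  have "istopology ?open"
    unfolding istopology_def
  proof (rule conjI; intro allI impI)
    fix S T assume "?open S" "?open T"
    moreover have "{p \<in> topspace X. f p \<in> S \<inter> T}
        = {p \<in> topspace X. f p \<in> S} \<inter> {p \<in> topspace X. f p \<in> T}" by auto
    ultimately show "?open (S \<inter> T)" by auto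
  next
    fix K assume "\<forall>S\<in>K. ?open S"
    moreover have "{p \<in> topspace X. f p \<in> \<Union>K} = (\<Union>S\<in>K. {p \<in> topspace X. f p \<in> S})" by auto
    ultimately show "?open (\<Union>K)" by auto
  qed
  then have openin_Y: "openin ?Y = ?open" by simp
  have "topspace ?Y = f ` topspace X"
  proof (rule subset_antisym)
    show "topspace ?Y \<subseteq> f ` topspace X" using openin_topspace[of ?Y] unfolding openin_Y by blast
    have "{p \<in> topspace X. f p \<in> f ` topspace X} = topspace X" by blast
    then have "openin ?Y (f ` topspace X)" unfolding openin_Y by simp
    then show "f ` topspace X \<subseteq> topspace ?Y" by (rule openin_subset)
  qed
  then show ?thesis unfolding quotient_map_def openin_Y by simp
qed

lemma equivclp_classes_eq_iff: "{y. equivclp R x y} = {y. equivclp R x' y} \<longleftrightarrow> equivclp R x x'"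
proof
  assume "{y. equivclp R x y} = {y. equivclp R x' y}"
  then show "equivclp R x x'" using equivclp_refl[of R x'] by blast
next
  assume xx': "equivclp R x x'"
  show "{y. equivclp R x y} = {y. equivclp R x' y}"
    using equivclp_trans[OF xx'] equivclp_trans[OF equivclp_sym[OF xx']] by blast
qed

lemma rel_boundary_disjoint:
  assumes "open S" shows "rel_boundary U S \<inter> S = {}"
proof -
  have "S \<inter> U \<subseteq> top_of_set U interior_of S"
    by (intro interior_of_maximal) (use openin_open_Int[OF assms, of U] in \<open>auto simp: Int_commute\<close>)
  moreover have "rel_boundary U S \<subseteq> U - top_of_set U interior_of S"
    unfolding rel_boundary_def frontier_of_def using closure_of_subset_topspace by fastforce
  ultimately show ?thesis by blast
qed

lemma rel_boundary_subset_closure: "rel_boundary U S \<subseteq> closure S"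
  unfolding rel_boundary_def frontier_of_def closure_of_subtopology
  using closure_mono[of "U \<inter> S" S] by auto

lemma dense_Sigma_in_sum_topology:
  assumes "\<And>i. i \<in> I \<Longrightarrow> X i closure_of S i = topspace (X i)"
  shows "sum_topology X I closure_of Sigma I S = topspace (sum_topology X I)"
  unfolding dense_intersects_open
proof (intro allI impI)
  fix T assume "openin (sum_topology X I) T \<and> T \<noteq> {}"
  then obtain i x where T: "i \<in> I" "openin (X i) {x. (i, x) \<in> T}" "(i, x) \<in> T"
    by (auto simp: openin_sum_topology)
  then have "S i \<inter> {x. (i, x) \<in> T} \<noteq> {}"
    using assms[of i] unfolding dense_intersects_open by blast
  then show "Sigma I S \<inter> T \<noteq> {}" using T(1) by blast
qed

lemma is_chart_inj_on:
  assumes "is_chart M \<alpha>" shows "inj_on (cmap \<alpha>) (cdom \<alpha>)"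
proof -
  have "topspace (subtopology M (cdom \<alpha>)) = cdom \<alpha>"
    using assms openin_subset[of M "cdom \<alpha>"] unfolding is_chart_def by auto
  then show ?thesis
    using assms homeomorphic_imp_injective_map unfolding is_chart_def by metis
qed

lemma is_chart_open_image:
  assumes "is_chart M \<alpha>" "openin M W"
  shows "open (cmap \<alpha> ` (W \<inter> cdom \<alpha>))"
proof -
  have "openin (subtopology M (cdom \<alpha>)) (W \<inter> cdom \<alpha>)"
    using assms by (simp add: is_chart_def openin_open_subtopology openin_Int)
  then have "openin (top_of_set (cran \<alpha>)) (cmap \<alpha> ` (W \<inter> cdom \<alpha>))"
    using assms(1) homeomorphic_imp_open_map unfolding is_chart_def open_map_def by blast
  then show ?thesis using assms(1) openin_open_trans unfolding is_chart_def by blast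
qed

definition underlying_point :: "(('a, 'e::euclidean_space) chart \<times> 'e set) \<times> 'e \<Rightarrow> 'a option" where
  "underlying_point p =
     (if snd p \<in> cran (fst (fst p)) then Some (inv_into (cdom (fst (fst p))) (cmap (fst (fst p))) (snd p))
      else None)"

lemma underlying_point_chart:
  "is_chart M \<alpha> \<Longrightarrow> x \<in> cdom \<alpha> \<Longrightarrow> underlying_point ((\<alpha>, U), cmap \<alpha> x) = Some x"
  by (simp add: underlying_point_def cran_def is_chart_inj_on)

lemma underlying_point_SomeD:
  assumes "underlying_point ((\<alpha>, U), y) = Some x"
  shows "x \<in> cdom \<alpha>" "y = cmap \<alpha> x"
proof -
  have "y \<in> cmap \<alpha> ` cdom \<alpha>" "x = inv_into (cdom \<alpha>) (cmap \<alpha>) y"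
    using assms by (simp_all add: underlying_point_def cran_def split: if_splits)
  then show "x \<in> cdom \<alpha>" "y = cmap \<alpha> x" by (simp_all add: inv_into_into f_inv_into_f)
qed

lemma underlying_point_in_image_iff:
  assumes "is_chart M \<alpha>"
  shows "underlying_point ((\<alpha>, U), y) \<in> Some ` W \<longleftrightarrow> y \<in> cmap \<alpha> ` (W \<inter> cdom \<alpha>)"
proof
  assume "underlying_point ((\<alpha>, U), y) \<in> Some ` W"
  then show "y \<in> cmap \<alpha> ` (W \<inter> cdom \<alpha>)" using underlying_point_SomeD[of \<alpha> U y] by blast
next
  assume "y \<in> cmap \<alpha> ` (W \<inter> cdom \<alpha>)"
  then show "underlying_point ((\<alpha>, U), y) \<in> Some ` W" using underlying_point_chart[OF assms] by auto
qed

lemma topspace_NQ: "topspace (NQ A Q) = Sigma (SQ A Q) Npiece"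
  by (simp add: NQ_def o_def)

lemma chart_in_SQ: "\<alpha> \<in> A \<Longrightarrow> (\<alpha>, cran \<alpha>) \<in> SQ A Q"
  unfolding SQ_def by blast

lemma ident_chart_points:
  "x \<in> cdom \<alpha> \<Longrightarrow> x \<in> cdom \<beta> \<Longrightarrow> ident ((\<alpha>, U), cmap \<alpha> x) ((\<beta>, X), cmap \<beta> x)"
  unfolding ident_def Let_def cran_def by auto

context
  fixes M :: "'a topology"
    and A :: "('a, 'e::euclidean_space) chart set"
    and Q :: "(('a, 'e) chart \<times> 'e set) set"
  assumes atlas: "maximal_smooth_atlas M A"
    and Q: "Q \<subseteq> EXT M A"
begin

lemma atlas_is_chart: "\<alpha> \<in> A \<Longrightarrow> is_chart M \<alpha>"
  using atlas unfolding maximal_smooth_atlas_def by blast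

lemma atlas_cdom_subset: "\<alpha> \<in> A \<Longrightarrow> cdom \<alpha> \<subseteq> topspace M"
  using atlas_is_chart openin_subset unfolding is_chart_def by blast

lemma atlas_cover:
  assumes "x \<in> topspace M" obtains \<alpha> where "\<alpha> \<in> A" "x \<in> cdom \<alpha>"
  using assms atlas unfolding maximal_smooth_atlas_def by blast

lemma SQ_chart: "e \<in> SQ A Q \<Longrightarrow> fst e \<in> A"
  using Q unfolding SQ_def EXT_def by auto

lemma chart_point_in_NQ:
  assumes "\<alpha> \<in> A" "x \<in> cdom \<alpha>"
  shows "((\<alpha>, cran \<alpha>), cmap \<alpha> x) \<in> topspace (NQ A Q)"
proof -
  have "cmap \<alpha> x \<in> Npiece (\<alpha>, cran \<alpha>)" using assms(2) by (simp add: Npiece_def cran_def)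
  then show ?thesis using chart_in_SQ[OF assms(1)] by (simp add: topspace_NQ)
qed

lemma ident_underlying_point:
  assumes "p \<in> topspace (NQ A Q)" "p' \<in> topspace (NQ A Q)" "ident p p'"
  shows "underlying_point p = underlying_point p'"
proof -
  obtain \<alpha> U x \<beta> X y where p: "p = ((\<alpha>, U), x)" and p': "p' = ((\<beta>, X), y)"
    by (metis prod.collapse)
  have "(\<alpha>, U) \<in> SQ A Q" "(\<beta>, X) \<in> SQ A Q" using assms(1,2) unfolding p p' topspace_NQ by simp_all
  then have \<alpha>: "is_chart M \<alpha>" and \<beta>: "is_chart M \<beta>"
    using SQ_chart[of "(\<alpha>, U)"] SQ_chart[of "(\<beta>, X)"] by (simp_all add: atlas_is_chart)
  have "ident ((\<alpha>, U), x) ((\<beta>, X), y)" using assms(3) unfolding p p' .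
  then consider z where "z \<in> cdom \<alpha>" "z \<in> cdom \<beta>" "cmap \<alpha> z = x" "cmap \<beta> z = y"
    | "x \<in> rel_boundary U (cran \<alpha>)" "y \<in> rel_boundary X (cran \<beta>)"
    unfolding ident_def Let_def fst_conv snd_conv by blast
  then show ?thesis
  proof cases
    case 1
    then show ?thesis
      unfolding p p' using underlying_point_chart[OF \<alpha>, of z U] underlying_point_chart[OF \<beta>, of z X]
      by simp
  next
    case 2
    moreover have "open (cran \<alpha>)" "open (cran \<beta>)" using \<alpha> \<beta> unfolding is_chart_def by simp_all
    ultimately have "x \<notin> cran \<alpha>" "y \<notin> cran \<beta>"
      using rel_boundary_disjoint[of "cran \<alpha>" U] rel_boundary_disjoint[of "cran \<beta>" X] by blast+
    then show ?thesis unfolding underlying_point_def p p' by simp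
  qed
qed

lemma qrel_underlying_point: "qrel A Q p p' \<Longrightarrow> underlying_point p = underlying_point p'"
  unfolding qrel_def
proof (induction rule: equivclp_induct)
  case (step y z)
  then show ?case using ident_underlying_point[of y z] ident_underlying_point[of z y] by auto
qed simp

lemma qmap_eq_of_ident:
  "p \<in> topspace (NQ A Q) \<Longrightarrow> p' \<in> topspace (NQ A Q) \<Longrightarrow> ident p p' \<Longrightarrow> qmap A Q p = qmap A Q p'"
  unfolding qmap_def qrel_def equivclp_classes_eq_iff by (simp add: r_into_equivclp)

lemma qmap_chart_points_eq:
  assumes "\<alpha> \<in> A" "\<beta> \<in> A" "x \<in> cdom \<alpha>" "x \<in> cdom \<beta>"
  shows "qmap A Q ((\<alpha>, cran \<alpha>), cmap \<alpha> x) = qmap A Q ((\<beta>, cran \<beta>), cmap \<beta> x)"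
  using assms by (intro qmap_eq_of_ident chart_point_in_NQ ident_chart_points)

lemma iota_eq:
  assumes "\<alpha> \<in> A" "x \<in> cdom \<alpha>"
  shows "iota A Q x = qmap A Q ((\<alpha>, cran \<alpha>), cmap \<alpha> x)"
proof -
  let ?\<beta> = "SOME \<beta>. \<beta> \<in> A \<and> x \<in> cdom \<beta>"
  have "?\<beta> \<in> A \<and> x \<in> cdom ?\<beta>" by (rule someI[where x = \<alpha>]) (simp add: assms)
  then have "qmap A Q ((?\<beta>, cran ?\<beta>), cmap ?\<beta> x) = qmap A Q ((\<alpha>, cran \<alpha>), cmap \<alpha> x)"
    using assms by (intro qmap_chart_points_eq) simp_all
  then show ?thesis unfolding iota_def Let_def .
qed

lemma qmap_eq_iota_iff:
  assumes p: "p \<in> topspace (NQ A Q)" and x: "x \<in> topspace M"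
  shows "qmap A Q p = iota A Q x \<longleftrightarrow> underlying_point p = Some x"
proof
  obtain \<beta> where \<beta>: "\<beta> \<in> A" "x \<in> cdom \<beta>" using atlas_cover x by blast
  assume "qmap A Q p = iota A Q x"
  then have "qrel A Q p ((\<beta>, cran \<beta>), cmap \<beta> x)"
    unfolding iota_eq[OF \<beta>] qmap_def qrel_def equivclp_classes_eq_iff .
  from qrel_underlying_point[OF this] show "underlying_point p = Some x"
    using underlying_point_chart[OF atlas_is_chart[OF \<beta>(1)] \<beta>(2)] by (rule trans)
next
  obtain \<alpha> U y where pe: "p = ((\<alpha>, U), y)" by (metis prod.collapse)
  have "(\<alpha>, U) \<in> SQ A Q" using p unfolding pe topspace_NQ by simp
  then have \<alpha>: "\<alpha> \<in> A" using SQ_chart[of "(\<alpha>, U)"] by simp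
  assume "underlying_point p = Some x"
  then have "underlying_point ((\<alpha>, U), y) = Some x" unfolding pe .
  then have x: "x \<in> cdom \<alpha>" and y: "y = cmap \<alpha> x" by (rule underlying_point_SomeD)+
  have "qmap A Q ((\<alpha>, U), cmap \<alpha> x) = qmap A Q ((\<alpha>, cran \<alpha>), cmap \<alpha> x)"
    using p x unfolding pe y by (intro qmap_eq_of_ident chart_point_in_NQ[OF \<alpha>] ident_chart_points)
  then show "qmap A Q p = iota A Q x" unfolding pe y iota_eq[OF \<alpha> x] .
qed

lemma inj_on_iota: "inj_on (iota A Q) (topspace M)"
proof (rule inj_onI)
  fix x y assume x: "x \<in> topspace M" and y: "y \<in> topspace M" and "iota A Q x = iota A Q y"
  obtain \<alpha> where \<alpha>: "\<alpha> \<in> A" "x \<in> cdom \<alpha>" using atlas_cover x by blast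
  let ?p = "((\<alpha>, cran \<alpha>), cmap \<alpha> x)"
  have p: "?p \<in> topspace (NQ A Q)" using chart_point_in_NQ[OF \<alpha>] .
  have "qmap A Q ?p = iota A Q x" "qmap A Q ?p = iota A Q y"
    using iota_eq[OF \<alpha>] \<open>iota A Q x = iota A Q y\<close> by simp_all
  then have "underlying_point ?p = Some x" "underlying_point ?p = Some y"
    using qmap_eq_iota_iff[OF p x] qmap_eq_iota_iff[OF p y] by blast+
  then show "x = y" by simp
qed

lemma quotient_map_qmap: "quotient_map (NQ A Q) (QM A Q) (qmap A Q)"
  unfolding QM_def by (rule quotient_map_quotient_topology)

lemma openin_NQ_underlying_point_preimage:
  assumes W: "openin M W"
  shows "openin (NQ A Q) {p \<in> topspace (NQ A Q). underlying_point p \<in> Some ` W}"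
    (is "openin (NQ A Q) ?P")
proof -
  have "openin (top_of_set (Npiece e)) {y. (e, y) \<in> ?P}" if e: "e \<in> SQ A Q" for e
  proof -
    obtain \<alpha> U where e_def: "e = (\<alpha>, U)" by (metis prod.collapse)
    have \<alpha>: "is_chart M \<alpha>" using atlas_is_chart SQ_chart[OF e] unfolding e_def by simp
    have "{y. (e, y) \<in> ?P} = Npiece e \<inter> cmap \<alpha> ` (W \<inter> cdom \<alpha>)"
      using e underlying_point_in_image_iff[OF \<alpha>, of U _ W] unfolding e_def topspace_NQ by blast
    then show ?thesis using is_chart_open_image[OF \<alpha> W] by (simp add: openin_open_Int)
  qed
  moreover have "openin (NQ A Q) ?P \<longleftrightarrow> ?P \<subseteq> Sigma (SQ A Q) (topspace \<circ> (\<lambda>e. top_of_set (Npiece e)))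
      \<and> (\<forall>e \<in> SQ A Q. openin (top_of_set (Npiece e)) {y. (e, y) \<in> ?P})"
    unfolding NQ_def by (rule openin_sum_topology)
  moreover have "?P \<subseteq> Sigma (SQ A Q) (topspace \<circ> (\<lambda>e. top_of_set (Npiece e)))"
    unfolding topspace_NQ by auto
  ultimately show ?thesis by blast
qed

lemma continuous_map_iota_on_chart:
  assumes \<alpha>: "\<alpha> \<in> A"
  shows "continuous_map (subtopology M (cdom \<alpha>)) (QM A Q) (iota A Q)"
proof -
  have chart: "continuous_map (subtopology M (cdom \<alpha>)) (top_of_set (cran \<alpha>)) (cmap \<alpha>)"
    using atlas_is_chart[OF \<alpha>] homeomorphic_imp_continuous_map unfolding is_chart_def by blast
  have "Npiece (\<alpha>, cran \<alpha>) = cran \<alpha>"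
    using frontier_of_topspace[of "top_of_set (cran \<alpha>)"] unfolding Npiece_def rel_boundary_def by simp
  then have inclusion: "continuous_map (top_of_set (cran \<alpha>)) (NQ A Q) (\<lambda>y. ((\<alpha>, cran \<alpha>), y))"
    using continuous_map_component_injection[OF chart_in_SQ[OF \<alpha>], of "\<lambda>e. top_of_set (Npiece e)" Q]
    unfolding NQ_def by simp
  have "continuous_map (subtopology M (cdom \<alpha>)) (QM A Q) (qmap A Q \<circ> (\<lambda>y. ((\<alpha>, cran \<alpha>), y)) \<circ> cmap \<alpha>)"
    using continuous_map_compose[OF inclusion quotient_imp_continuous_map[OF quotient_map_qmap]]
    by (rule continuous_map_compose[OF chart])
  then show ?thesis
    by (rule continuous_map_eq) (simp add: iota_eq[OF \<alpha>])
qed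

lemma continuous_map_iota: "continuous_map M (QM A Q) (iota A Q)"
proof (rule pasting_lemma[where I = A and T = cdom and f = "\<lambda>_. iota A Q"])
  show "openin M (cdom \<alpha>)" if "\<alpha> \<in> A" for \<alpha>
    using atlas_is_chart[OF that] unfolding is_chart_def by blast
  show "\<exists>\<alpha>. \<alpha> \<in> A \<and> x \<in> cdom \<alpha> \<and> iota A Q x = iota A Q x" if "x \<in> topspace M" for x
    using atlas_cover[OF that] by blast
  show "continuous_map (subtopology M (cdom \<alpha>)) (QM A Q) (iota A Q)" if "\<alpha> \<in> A" for \<alpha>
    using that by (rule continuous_map_iota_on_chart)
qed simp

lemma open_map_iota: "open_map M (QM A Q) (iota A Q)"
  unfolding open_map_def
proof (intro allI impI)
  fix W assume W: "openin M W"
  then have W_sub: "W \<subseteq> topspace M" by (rule openin_subset)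
  have pointwise: "qmap A Q p \<in> iota A Q ` W \<longleftrightarrow> underlying_point p \<in> Some ` W"
    if p: "p \<in> topspace (NQ A Q)" for p
  proof
    assume "qmap A Q p \<in> iota A Q ` W"
    then obtain w where w: "w \<in> W" "qmap A Q p = iota A Q w" by blast
    then have "underlying_point p = Some w" using qmap_eq_iota_iff[OF p, of w] W_sub by auto
    then show "underlying_point p \<in> Some ` W" using w(1) by blast
  next
    assume "underlying_point p \<in> Some ` W"
    then obtain w where w: "w \<in> W" "underlying_point p = Some w" by blast
    then have "qmap A Q p = iota A Q w" using qmap_eq_iota_iff[OF p, of w] W_sub by auto
    then show "qmap A Q p \<in> iota A Q ` W" using w(1) by blast
  qed
  have "{p \<in> topspace (NQ A Q). qmap A Q p \<in> iota A Q ` W}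
      = {p \<in> topspace (NQ A Q). underlying_point p \<in> Some ` W}"
    by (intro Collect_cong conj_cong refl pointwise)
  then have "openin (NQ A Q) {p \<in> topspace (NQ A Q). qmap A Q p \<in> iota A Q ` W}"
    using openin_NQ_underlying_point_preimage[OF W] by simp
  moreover have "iota A Q ` W \<subseteq> topspace (QM A Q)"
    using continuous_map_image_subset_topspace[OF continuous_map_iota] W_sub by blast
  ultimately show "openin (QM A Q) (iota A Q ` W)"
    using quotient_map_qmap unfolding quotient_map_def by simp
qed

lemma qmap_in_iota_image:
  assumes p: "p \<in> topspace (NQ A Q)" and interior: "snd p \<in> cran (fst (fst p))"
  shows "qmap A Q p \<in> iota A Q ` topspace M"
proof -
  obtain \<alpha> U y where pe: "p = ((\<alpha>, U), y)" by (metis prod.collapse)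
  have "(\<alpha>, U) \<in> SQ A Q" using p unfolding pe topspace_NQ by simp
  then have \<alpha>: "\<alpha> \<in> A" using SQ_chart[of "(\<alpha>, U)"] by simp
  have "y \<in> cmap \<alpha> ` cdom \<alpha>" using interior unfolding pe cran_def by simp
  then obtain x where x: "x \<in> cdom \<alpha>" and y: "y = cmap \<alpha> x" by blast
  have "underlying_point p = Some x"
    unfolding pe y using underlying_point_chart[OF atlas_is_chart[OF \<alpha>] x] .
  moreover have "x \<in> topspace M" using atlas_cdom_subset[OF \<alpha>] x by blast
  ultimately have "qmap A Q p = iota A Q x" using qmap_eq_iota_iff[OF p] by simp
  with \<open>x \<in> topspace M\<close> show ?thesis by blast
qed

lemma dense_iota_image: "QM A Q closure_of (iota A Q ` topspace M) = topspace (QM A Q)"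
proof -
  let ?R = "Sigma (SQ A Q) (\<lambda>e. cran (fst e))"
  have "top_of_set (Npiece e) closure_of cran (fst e) = topspace (top_of_set (Npiece e))" for e
    using rel_boundary_subset_closure closure_subset
    unfolding closure_of_subtopology Npiece_def by fastforce
  then have dense: "NQ A Q closure_of ?R = topspace (NQ A Q)"
    unfolding NQ_def by (rule dense_Sigma_in_sum_topology)
  have "qmap A Q ` ?R \<subseteq> iota A Q ` topspace M"
    using qmap_in_iota_image unfolding topspace_NQ Npiece_def by force
  have "topspace (QM A Q) = qmap A Q ` (NQ A Q closure_of ?R)"
    unfolding dense by (rule quotient_imp_surjective_map[OF quotient_map_qmap, symmetric])
  also have "\<dots> \<subseteq> QM A Q closure_of (qmap A Q ` ?R)"
    by (intro continuous_map_image_closure_subset quotient_imp_continuous_map quotient_map_qmap)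
  also have "\<dots> \<subseteq> QM A Q closure_of (iota A Q ` topspace M)"
    by (rule closure_of_mono) fact
  finally show ?thesis by (intro subset_antisym closure_of_subset_topspace)
qed

end

theorem mainTheorem18:
  fixes M :: "'a topology"
    and A :: "('a, 'e::euclidean_space) chart set"
    and Q :: "(('a, 'e) chart \<times> 'e set) set"
  assumes "smooth_manifold M A"
    and "Q \<subseteq> EXT M A"
  shows "(\<forall>\<alpha>\<in>A. \<forall>\<beta>\<in>A. \<forall>x\<in>cdom \<alpha> \<inter> cdom \<beta>.
            qmap A Q ((\<alpha>, cran \<alpha>), cmap \<alpha> x) = qmap A Q ((\<beta>, cran \<beta>), cmap \<beta> x))
       \<and> (\<forall>\<alpha>\<in>A. \<forall>x\<in>cdom \<alpha>. iota A Q x = qmap A Q ((\<alpha>, cran \<alpha>), cmap \<alpha> x))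
       \<and> inj_on (iota A Q) (topspace M)
       \<and> continuous_map M (QM A Q) (iota A Q)
       \<and> embedding_map M (QM A Q) (iota A Q)
       \<and> openin (QM A Q) (iota A Q ` topspace M)
       \<and> QM A Q closure_of (iota A Q ` topspace M) = topspace (QM A Q)"
proof -
  have atlas: "maximal_smooth_atlas M A" using assms(1) unfolding smooth_manifold_def by simp
  note cont = continuous_map_iota[OF atlas assms(2)]
    and open_map = open_map_iota[OF atlas assms(2)]
    and inj = inj_on_iota[OF atlas assms(2)]
  show ?thesis
  proof (intro conjI ballI)
    fix \<alpha> \<beta> x assume "\<alpha> \<in> A" "\<beta> \<in> A" "x \<in> cdom \<alpha> \<inter> cdom \<beta>"
    then show "qmap A Q ((\<alpha>, cran \<alpha>), cmap \<alpha> x) = qmap A Q ((\<beta>, cran \<beta>), cmap \<beta> x)"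
      using qmap_chart_points_eq[OF atlas assms(2)] by blast
  next
    fix \<alpha> x assume "\<alpha> \<in> A" "x \<in> cdom \<alpha>"
    then show "iota A Q x = qmap A Q ((\<alpha>, cran \<alpha>), cmap \<alpha> x)"
      by (rule iota_eq[OF atlas assms(2)])
  next
    show "embedding_map M (QM A Q) (iota A Q)"
      using cont open_map inj by (rule injective_open_imp_embedding_map)
    show "openin (QM A Q) (iota A Q ` topspace M)"
      using open_map openin_topspace unfolding open_map_def by blast
    show "QM A Q closure_of (iota A Q ` topspace M) = topspace (QM A Q)"
      using atlas assms(2) by (rule dense_iota_image)
  qed (fact inj cont)+
qed

end
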